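(* Let $G$ act 3-discontinuously and 2-cocompactly on a compactum $T$ and let $A$ be as in the context. Let $B\subset A$ be infinite, $d\ge 1$ an integer, and $C=N_d(B)$ the set of vertices of $\Gamma_A$ at $\Gamma_A$-distance at most $d$ from $B$. Then a point of $T$ is an accumulation point of $C$ if and only if it is an accumulation point of $B$. In particular, if $(\mathbf b_n)$, $(\mathbf c_n)$ are sequences in $A$ with $d_A(\mathbf b_n,\mathbf c_n)$ uniformly bounded, then $\mathbf b_n\to p\in T$ if and only if $\mathbf c_n\to p$.
   Context: A compactum is a compact Hausdorff space ($\ge3$ points); 3-discontinuous: the induced action on 3-element subsets of $T$ is properly discontinuous; 2-cocompact: the induced action on 2-element subsets is cocompact. An entourage is a neighborhood of the diagonal in the space $S^2T$ of unordered pairs of points of $T$; a set $U\subset T$ is $\mathbf e$-small if $\{x,y\}\in\mathbf e$ for all $x,y\in U$. Entourages $\mathbf a,\mathbf b$ are unlinked if $T=a\cup b$ with $a$ $\mathbf a$-small and $b$ $\mathbf b$-small, linked ($\mathbf a\#\mathbf b$) otherwise. Here $A=G\mathbf a_0$ is the $G$-orbit of an entourage $\mathbf a_0$ linked with itself (so $A$ is discrete: each entourage is linked with only finitely many elements of $A$). $\Gamma_A$ is the graph with vertex set $A$ and edges $\{\mathbf a,\mathbf b\}$ with $\mathbf a\#\mathbf b$; $d_A$ is its graph distance (possibly $\infty$). A point $p\in T$ is an accumulation point of $B\subset A$ if for every open $o\ni p$ in $T$ there are infinitely many $\mathbf b\in B$ with $T\setminus o$ $\mathbf b$-small; $\mathbf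 b_n\to p$ means for every open $o\ni p$, $T\setminus o$ is $\mathbf b_n$-small for all large $n$. *)

theory Defs
  imports "HOL-Analysis.Analysis" "HOL-Algebra.Group_Action" "HOL-Library.Uprod"
begin

text \<open>The compactum T is the type 'a (class t2_space, with compact UNIV and at least
three points). The group G acts on T via phi (a HOL-Algebra group action by
homeomorphisms).\<close>

definition compactum_type :: "'a::t2_space itself \<Rightarrow> bool" where
  "compactum_type _ \<longleftrightarrow> compact (UNIV :: 'a set) \<and>
     (\<exists>x y z :: 'a. x \<noteq> y \<and> y \<noteq> z \<and> x \<noteq> z)"

definition homeo_action :: "('g, 'b) monoid_scheme \<Rightarrow> ('g \<Rightarrow> 'a::topological_space \<Rightarrow> 'a) \<Rightarrow> bool" where
  "homeo_action G \<phi> \<longleftrightarrow> group_action G (UNIV :: 'a set) \<phi> \<and>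
     (\<forall>g\<in>carrier G. continuous_on UNIV (\<phi> g))"

text \<open>Space of 3-element subsets (quotient of distinct triples) and of 2-element subsets.\<close>

definition theta3_top :: "'a::topological_space set topology" where
  "theta3_top = topology (\<lambda>W. W \<subseteq> {S. card S = 3} \<and>
      open {(x, y, z). x \<noteq> y \<and> y \<noteq> z \<and> x \<noteq> z \<and> {x, y, z} \<in> W})"

definition theta2_top :: "'a::topological_space set topology" where
  "theta2_top = topology (\<lambda>W. W \<subseteq> {S. card S = 2} \<and>
      open {(x, y). x \<noteq> y \<and> {x, y} \<in> W})"

definition three_discontinuous :: "('g, 'b) monoid_scheme \<Rightarrow> ('g \<Rightarrow> 'a::topological_space \<Rightarrow> 'a) \<Rightarrow> bool" where
  "three_discontinuous G \<phi> \<longleftrightarrow>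
     (\<forall>K. compactin theta3_top K \<longrightarrow>
        finite {g \<in> carrier G. ((`) (\<phi> g)) ` K \<inter> K \<noteq> {}})"

definition two_cocompact :: "('g, 'b) monoid_scheme \<Rightarrow> ('g \<Rightarrow> 'a::topological_space \<Rightarrow> 'a) \<Rightarrow> bool" where
  "two_cocompact G \<phi> \<longleftrightarrow>
     (\<exists>K. compactin theta2_top K \<and>
        (\<Union>g\<in>carrier G. ((`) (\<phi> g)) ` K) = {S. card S = 2})"

text \<open>S^2 T: unordered pairs (incl. diagonal) with the quotient topology from T x T.\<close>

definition s2_top :: "'a::topological_space uprod topology" where
  "s2_top = topology (\<lambda>V. open {(x, y). Upair x y \<in> V})"

definition entourage :: "'a::topological_space uprod set \<Rightarrow> bool" where
  "entourage e \<longleftrightarrow> (\<exists>V. openin s2_top V \<and> range (\<lambda>x. Upair x x) \<subseteq> V \<and> V \<subseteq> e)"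

definition small :: "'a uprod set \<Rightarrow> 'a set \<Rightarrow> bool" where
  "small e U \<longleftrightarrow> (\<forall>x\<in>U. \<forall>y\<in>U. Upair x y \<in> e)"

definition linked :: "'a uprod set \<Rightarrow> 'a uprod set \<Rightarrow> bool" where
  "linked a b \<longleftrightarrow> \<not> (\<exists>U V. U \<union> V = UNIV \<and> small a U \<and> small b V)"

definition ent_act :: "('g \<Rightarrow> 'a \<Rightarrow> 'a) \<Rightarrow> 'g \<Rightarrow> 'a uprod set \<Rightarrow> 'a uprod set" where
  "ent_act \<phi> g e = map_uprod (\<phi> g) ` e"

text \<open>Graph distance in Gamma_A (vertex set A, edges between linked entourages);
  infinity if no walk exists.\<close>

definition dA :: "'a uprod set set \<Rightarrow> 'a uprod set \<Rightarrow> 'a uprod set \<Rightarrow> enat" where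
  "dA A a b = (INF n \<in> {n. \<exists>xs. length xs = Suc n \<and> xs ! 0 = a \<and> xs ! n = b \<and>
       set xs \<subseteq> A \<and> (\<forall>i<n. linked (xs ! i) (xs ! Suc i))}. enat n)"

definition nbhd :: "'a uprod set set \<Rightarrow> nat \<Rightarrow> 'a uprod set set \<Rightarrow> 'a uprod set set" where
  "nbhd A d B = {c \<in> A. \<exists>b\<in>B. dA A c b \<le> enat d}"

definition acc_point :: "'a uprod set set \<Rightarrow> 'a::topological_space \<Rightarrow> bool" where
  "acc_point B p \<longleftrightarrow> (\<forall>W. open W \<and> p \<in> W \<longrightarrow> infinite {b \<in> B. small b (- W)})"

definition ent_tendsto :: "(nat \<Rightarrow> 'a uprod set) \<Rightarrow> 'a::topological_space \<Rightarrow> bool" where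
  "ent_tendsto b p \<longleftrightarrow> (\<forall>W. open W \<and> p \<in> W \<longrightarrow> (\<forall>\<^sub>F n in sequentially. small (b n) (- W)))"

end

theory Submission
  imports Defs
begin

text \<open>
  The proof rests on one finiteness statement: for every neighbourhood \<open>v\<close> of the diagonal of
  \<open>T \<times> T\<close>, all but finitely many elements of \<open>A\<close> are small on the complement of some \<open>v\<close>-ball.
  It is obtained from 3-discontinuity: a ladder \<open>L0 \<subseteq> L1 \<subseteq> L2 \<subseteq> L3\<close> of neighbourhoods
  (uniform structure of the compactum) gives a compact set of \<open>L0\<close>-separated triples, and every
  group element moving that set off itself contracts the complement of an \<open>L2\<close>-ball (a purely
  combinatorial argument about three points). Consequences: \<open>\<Gamma>_A\<close> is locally finite, and an
  element of \<open>A\<close> linked with one concentrated near \<open>p\<close> is itself concentrated near \<open>p\<close>, up to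
  finitely many exceptions. Iterating along walks of bounded length gives both claims of the
  theorem.
\<close>

definition diag_nbhd :: "('a::topological_space \<times> 'a) set \<Rightarrow> bool" where
  "diag_nbhd N \<longleftrightarrow> open N \<and> (\<forall>x. (x, x) \<in> N)"

text \<open>The library states this for metric spaces only; it holds in every Hausdorff type.\<close>

lemma Hausdorff_space_euclidean_t2: "Hausdorff_space (euclidean :: 'a::t2_space topology)"
  unfolding Hausdorff_space_def disjnt_def by (metis open_openin separation_t2)

lemma closure_nbhd_inside:
  fixes P :: "'a::t2_space set"
  assumes "compact (UNIV::'a set)" "open P" "a \<in> P"
  obtains Q where "open Q" "a \<in> Q" "closure Q \<subseteq> P"
proof -
  have "compactin euclidean {a}" by simp
  moreover have "compactin euclidean (- P)"
    using assms(1,2) by (simp add: compact_diff Compl_eq_Diff_UNIV)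
  moreover have "disjnt {a} (- P)" using assms(3) by simp
  ultimately obtain U V
    where UV: "openin euclidean U" "openin euclidean V" "{a} \<subseteq> U" "- P \<subseteq> V" "disjnt U V"
    by (rule Hausdorff_space_compact_separation[OF Hausdorff_space_euclidean_t2])
  then have "closure U \<subseteq> - V"
    by (intro closure_minimal) (auto simp: disjnt_iff)
  with UV show thesis using that[of U] by auto
qed

lemma separating_box:
  fixes a b :: "'a::t2_space"
  assumes "compact (UNIV::'a set)" "a \<noteq> b"
  obtains M B where "diag_nbhd M" "sym M" "open B" "(a, b) \<in> B" "B \<inter> M O M = {}"
proof -
  obtain P Q where PQ: "open P" "open Q" "a \<in> P" "b \<in> Q" "P \<inter> Q = {}"
    using assms(2) by (metis separation_t2)
  obtain P' where P': "open P'" "a \<in> P'" "closure P' \<subseteq> P"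
    using closure_nbhd_inside[OF assms(1) PQ(1,3)] .
  obtain Q' where Q': "open Q'" "b \<in> Q'" "closure Q' \<subseteq> Q"
    using closure_nbhd_inside[OF assms(1) PQ(2,4)] .
  define R where "R = - closure P' \<inter> - closure Q'"
  define M where "M = P \<times> P \<union> Q \<times> Q \<union> R \<times> R"
  have "diag_nbhd M"
    unfolding diag_nbhd_def M_def R_def using PQ P' Q' by (auto intro!: open_Times open_Un)
  moreover have "sym M" unfolding M_def by (auto intro: symI)
  moreover have "P' \<times> Q' \<inter> M O M = {}"
    using P' Q' PQ(5) closure_subset[of P'] closure_subset[of Q'] unfolding M_def R_def by blast
  ultimately show thesis
    using that[of M "P' \<times> Q'"] P' Q' by (simp add: open_Times)
qed

lemma diag_nbhd_sym_INT:
  assumes "finite D" "\<And>t. t \<in> D \<Longrightarrow> diag_nbhd (M t) \<and> sym (M t)"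
  shows "diag_nbhd (\<Inter>t\<in>D. M t)" "sym (\<Inter>t\<in>D. M t)"
proof -
  show "diag_nbhd (\<Inter>t\<in>D. M t)"
    using assms unfolding diag_nbhd_def by (auto intro!: open_INT)
  show "sym (\<Inter>t\<in>D. M t)"
  proof (rule symI)
    fix x y assume "(x, y) \<in> (\<Inter>t\<in>D. M t)"
    then have "(y, x) \<in> M t" if "t \<in> D" for t
      using symD[of "M t" x y] assms(2)[OF that] that by blast
    then show "(y, x) \<in> (\<Inter>t\<in>D. M t)" by blast
  qed
qed

text \<open>
  Cover the compact complement of \<open>N\<close> by
  finitely many separating boxes and intersect the corresponding neighbourhoods.
\<close>

lemma half_nbhd:
  fixes N :: "('a::t2_space \<times> 'a) set"
  assumes cU: "compact (UNIV::'a set)" and N: "diag_nbhd N"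
  obtains L where "diag_nbhd L" "sym L" "L O L \<subseteq> N"
proof -
  have "compact (- N)"
    using N compact_Times[OF cU cU] unfolding diag_nbhd_def
    by (simp add: compact_diff Compl_eq_Diff_UNIV)
  have "\<exists>M B. diag_nbhd M \<and> sym M \<and> open B \<and> t \<in> B \<and> B \<inter> M O M = {}"
    if t: "t \<in> - N" for t
  proof -
    obtain a b where ab: "t = (a, b)" "a \<noteq> b"
      using N t unfolding diag_nbhd_def by (cases t) auto
    obtain M B where "diag_nbhd M" "sym M" "open B" "(a, b) \<in> B" "B \<inter> M O M = {}"
      using separating_box[OF cU ab(2)] .
    then show ?thesis using ab(1) by blast
  qed
  then obtain M B where MB: "\<And>t. t \<in> - N \<Longrightarrow>
      diag_nbhd (M t) \<and> sym (M t) \<and> open (B t) \<and> t \<in> B t \<and> B t \<inter> M t O M t = {}"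
    by metis
  obtain D where D: "D \<subseteq> - N" "finite D" "- N \<subseteq> (\<Union>t\<in>D. B t)"
    using compactE_image[OF \<open>compact (- N)\<close>, of "- N" B] MB by blast
  define L where "L = (\<Inter>t\<in>D. M t)"
  have "diag_nbhd (M t) \<and> sym (M t)" if "t \<in> D" for t using MB D(1) that by blast
  then have "diag_nbhd L" "sym L" unfolding L_def using diag_nbhd_sym_INT[OF D(2)] by blast+
  moreover have "L O L \<subseteq> N"
  proof
    fix u assume u: "u \<in> L O L"
    show "u \<in> N"
    proof (rule ccontr)
      assume "u \<notin> N"
      then obtain t where t: "t \<in> D" "u \<in> B t" using D(3) by auto
      from u obtain x y z where "u = (x, z)" "(x, y) \<in> L" "(y, z) \<in> L" by auto
      then have "u \<in> M t O M t" using t(1) unfolding L_def by auto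
      then show False using t MB[of t] D(1) by auto
    qed
  qed
  ultimately show thesis using that by blast
qed

lemma diag_nbhd_relcomp_subset:
  assumes "diag_nbhd L" "L O L \<subseteq> N"
  shows "L \<subseteq> N"
proof
  fix u assume "u \<in> L"
  moreover obtain x y where "u = (x, y)" by fastforce
  moreover have "(x, x) \<in> L" using assms(1) unfolding diag_nbhd_def by simp
  ultimately show "u \<in> N" using assms(2) by auto
qed

text \<open>
  A ladder is a chain \<open>L0 \<subseteq> L1 \<subseteq> L2 \<subseteq> L3\<close> of symmetric relations in which each level contains
  the composite of the previous one with itself; it lets us chain up to three "closeness" steps.
\<close>

locale ladder =
  fixes L0 L1 L2 L3 :: "('a \<times> 'a) set"
  assumes refl0: "(x, x) \<in> L0"
    and sym_levels: "sym L0" "sym L1" "sym L2" "sym L3"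
    and comp_levels: "L0 O L0 \<subseteq> L1" "L1 O L1 \<subseteq> L2" "L2 O L2 \<subseteq> L3"
    and sub01: "L0 \<subseteq> L1" and sub12: "L1 \<subseteq> L2" and sub23: "L2 \<subseteq> L3"
begin

lemma sym0: "(x, y) \<in> L0 \<Longrightarrow> (y, x) \<in> L0"
  and sym1: "(x, y) \<in> L1 \<Longrightarrow> (y, x) \<in> L1"
  and sym3: "(x, y) \<in> L3 \<Longrightarrow> (y, x) \<in> L3"
  using sym_levels(1,2,4) by (auto dest: symD)

lemma step0: "(x, y) \<in> L0 \<Longrightarrow> (y, z) \<in> L0 \<Longrightarrow> (x, z) \<in> L1"
  and step1: "(x, y) \<in> L1 \<Longrightarrow> (y, z) \<in> L1 \<Longrightarrow> (x, z) \<in> L2"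
  using comp_levels by (auto intro: relcompI)

end

lemma nbhd_ladder:
  fixes N :: "('a::t2_space \<times> 'a) set"
  assumes cU: "compact (UNIV::'a set)" and N: "diag_nbhd N"
  obtains L0 L1 L2 L3 where "ladder L0 L1 L2 L3" "diag_nbhd L0" "L3 \<subseteq> N"
proof -
  obtain L3 where 3: "diag_nbhd L3" "sym L3" "L3 O L3 \<subseteq> N" using half_nbhd[OF cU N] .
  obtain L2 where 2: "diag_nbhd L2" "sym L2" "L2 O L2 \<subseteq> L3" using half_nbhd[OF cU 3(1)] .
  obtain L1 where 1: "diag_nbhd L1" "sym L1" "L1 O L1 \<subseteq> L2" using half_nbhd[OF cU 2(1)] .
  obtain L0 where 0: "diag_nbhd L0" "sym L0" "L0 O L0 \<subseteq> L1" using half_nbhd[OF cU 1(1)] .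
  have "ladder L0 L1 L2 L3"
    using 0 1 2 3 diag_nbhd_relcomp_subset[OF 0(1,3)] diag_nbhd_relcomp_subset[OF 1(1,3)]
      diag_nbhd_relcomp_subset[OF 2(1,3)]
    by unfold_locales (auto simp: diag_nbhd_def)
  then show thesis using that 0(1) diag_nbhd_relcomp_subset[OF 3(1,3)] by blast
qed

lemma shrinking_nbhd:
  fixes W :: "'a::t2_space set"
  assumes cU: "compact (UNIV::'a set)" and W: "open W" "p \<in> W"
  obtains U v where "open U" "p \<in> U" "U \<subseteq> W" "diag_nbhd v" "sym v" "(v O v) `` U \<subseteq> W"
proof -
  have "diag_nbhd (W \<times> W \<union> (- {p}) \<times> (- {p}))"
    unfolding diag_nbhd_def using W by (auto intro!: open_Un open_Times)
  then obtain L where L: "diag_nbhd L" "L O L \<subseteq> W \<times> W \<union> (- {p}) \<times> (- {p})"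
    using half_nbhd[OF cU] by metis
  obtain v where v: "diag_nbhd v" "sym v" "v O v \<subseteq> L" using half_nbhd[OF cU L(1)] .
  have vL: "v \<subseteq> L" by (rule diag_nbhd_relcomp_subset[OF v(1,3)])
  define U where "U = Pair p -` v"
  have "open U"
    using v(1) unfolding U_def diag_nbhd_def
    by (intro continuous_open_vimage) (auto intro!: continuous_intros)
  moreover have "p \<in> U" using v(1) unfolding U_def diag_nbhd_def by auto
  moreover have far: "(v O v) `` U \<subseteq> W"
  proof
    fix y assume "y \<in> (v O v) `` U"
    then obtain q s where "(p, q) \<in> v" "(q, s) \<in> v" "(s, y) \<in> v" unfolding U_def by auto
    then have "(p, s) \<in> L" "(s, y) \<in> L" using v(3) vL by auto
    then have "(p, y) \<in> W \<times> W \<union> (- {p}) \<times> (- {p})" using L(2) by auto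
    then show "y \<in> W" by auto
  qed
  moreover have "U \<subseteq> (v O v) `` U"
  proof
    fix q assume "q \<in> U"
    moreover have "(q, q) \<in> v O v" using v(1) unfolding diag_nbhd_def by auto
    ultimately show "q \<in> (v O v) `` U" by auto
  qed
  ultimately show thesis using that[of U v] v(1,2) by auto
qed

text \<open>
  The topologies on 3-element and 2-element subsets are quotient topologies; both are instances
  of the following pull-back construction.
\<close>

lemma istopology_pullback:
  fixes f :: "'a::topological_space \<Rightarrow> 'b"
  shows "istopology (\<lambda>W. W \<subseteq> C \<and> open (D \<inter> f -` W))"
  unfolding istopology_def
proof (rule conjI; intro allI impI)
  fix S T :: "'b set"
  assume "S \<subseteq> C \<and> open (D \<inter> f -` S)" "T \<subseteq> C \<and> open (D \<inter> f -` T)"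
  moreover have "D \<inter> f -` (S \<inter> T) = (D \<inter> f -` S) \<inter> (D \<inter> f -` T)" by auto
  ultimately show "S \<inter> T \<subseteq> C \<and> open (D \<inter> f -` (S \<inter> T))" by auto
next
  fix K :: "'b set set"
  assume K: "\<forall>W\<in>K. W \<subseteq> C \<and> open (D \<inter> f -` W)"
  have "D \<inter> f -` \<Union>K = (\<Union>W\<in>K. D \<inter> f -` W)" by auto
  moreover have "open (\<Union>W\<in>K. D \<inter> f -` W)" using K by (intro open_UN) auto
  moreover have "\<Union>K \<subseteq> C" using K by auto
  ultimately show "\<Union>K \<subseteq> C \<and> open (D \<inter> f -` \<Union>K)" by simp
qed

lemma openin_theta3:
  "openin theta3_top W \<longleftrightarrow> W \<subseteq> {S. card S = 3} \<and>
     open {(x::'a::topological_space, y, z). x \<noteq> y \<and> y \<noteq> z \<and> x \<noteq> z \<and> {x, y, z} \<in> W}"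
proof -
  define D where "D = {(x::'a, y, z). x \<noteq> y \<and> y \<noteq> z \<and> x \<noteq> z}"
  define f where "f = (\<lambda>(x::'a, y, z). {x, y, z})"
  have eq: "\<And>W. {(x, y, z). x \<noteq> y \<and> y \<noteq> z \<and> x \<noteq> z \<and> {x, y, z} \<in> W} = D \<inter> f -` W"
    unfolding D_def f_def by (simp add: set_eq_iff split_paired_all)
  have "openin theta3_top = (\<lambda>W. W \<subseteq> {S. card S = 3} \<and> open (D \<inter> f -` W))"
    unfolding theta3_top_def eq by (rule topology_inverse'[OF istopology_pullback])
  then show ?thesis unfolding eq by simp
qed

lemma openin_s2:
  "openin s2_top V \<longleftrightarrow> open {(x::'a::topological_space, y). Upair x y \<in> V}"
proof -
  have "\<And>V. {(x::'a, y). Upair x y \<in> V} = UNIV \<inter> case_prod Upair -` V"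
    by (simp add: set_eq_iff split_paired_all)
  then have "istopology (\<lambda>V. open {(x::'a, y). Upair x y \<in> V})"
    using istopology_pullback[of UNIV UNIV "case_prod Upair"] by simp
  then show ?thesis unfolding s2_top_def by (simp add: topology_inverse')
qed

text \<open>The space of 3-element subsets is all of them, since distinct triples form an open set.\<close>

lemma topspace_theta3: "topspace (theta3_top :: 'a::t2_space set topology) = {S. card S = 3}"
proof -
  have eq: "{(x::'a, y, z). x \<noteq> y \<and> y \<noteq> z \<and> x \<noteq> z}
      = - {t. fst t = fst (snd t)} \<inter> - {t. fst (snd t) = snd (snd t)} \<inter> - {t. fst t = snd (snd t)}"
    by auto
  have "open {(x::'a, y, z). x \<noteq> y \<and> y \<noteq> z \<and> x \<noteq> z}"
    unfolding eq by (intro open_Int open_Compl closed_Collect_eq continuous_intros)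
  moreover have "{(x::'a, y, z). x \<noteq> y \<and> y \<noteq> z \<and> x \<noteq> z \<and> {x, y, z} \<in> {S. card S = 3}}
      = {(x, y, z). x \<noteq> y \<and> y \<noteq> z \<and> x \<noteq> z}"
    by auto
  ultimately have "openin (theta3_top :: 'a set topology) {S. card S = 3}"
    unfolding openin_theta3 by simp
  then show ?thesis
    using openin_subset[of theta3_top "{S. card S = 3}"] unfolding topspace_def openin_theta3 by blast
qed

definition separated3 :: "('a \<times> 'a) set \<Rightarrow> 'a \<Rightarrow> 'a \<Rightarrow> 'a \<Rightarrow> bool" where
  "separated3 L x y z \<longleftrightarrow> (x, y) \<notin> L \<and> (y, z) \<notin> L \<and> (x, z) \<notin> L"

text \<open>
  For an open neighbourhood \<open>L\<close> of the diagonal, the \<open>L\<close>-separated triples form a compact set of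
  3-element subsets: a closed subset of \<open>T\<^sup>3\<close> mapped continuously into \<open>\<Theta>_3\<close>.
\<close>

lemma compactin_separated_triples:
  fixes L :: "('a::t2_space \<times> 'a) set"
  assumes cU: "compact (UNIV::'a set)" and L: "diag_nbhd L"
  shows "compactin theta3_top ((\<lambda>(x, y, z). {x, y, z}) ` {(x, y, z). separated3 L x y z})"
proof -
  define D where "D = {(x::'a, y, z). x \<noteq> y \<and> y \<noteq> z \<and> x \<noteq> z}"
  define C where "C = {(x::'a, y, z). separated3 L x y z}"
  have "C = (\<lambda>t. (fst t, fst (snd t))) -` (- L) \<inter> (\<lambda>t. (fst (snd t), snd (snd t))) -` (- L)
      \<inter> (\<lambda>t. (fst t, snd (snd t))) -` (- L)"
    unfolding C_def separated3_def by auto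
  moreover have "closed (- L)" using L unfolding diag_nbhd_def by auto
  ultimately have "closed C" by (simp add: closed_Int closed_vimage continuous_intros)
  then have "compact C"
    using compact_Int_closed[OF compact_Times[OF cU compact_Times[OF cU cU]]] by fastforce
  moreover have "C \<subseteq> D" using L unfolding C_def D_def separated3_def diag_nbhd_def by auto
  ultimately have "compactin (subtopology euclidean D) C" by (simp add: compactin_subtopology)
  moreover have "continuous_map (subtopology euclidean D) theta3_top (\<lambda>(x, y, z). {x, y, z})"
    unfolding continuous_map_def
  proof (intro conjI allI impI funcsetI)
    fix t assume "t \<in> topspace (subtopology euclidean D)"
    then show "(\<lambda>(x, y, z). {x, y, z}) t \<in> topspace theta3_top"
      unfolding topspace_theta3 D_def by (auto simp: card_insert_if)
  next
    fix U :: "'a set set" assume "openin theta3_top U"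
    then have "open {(x, y, z). x \<noteq> y \<and> y \<noteq> z \<and> x \<noteq> z \<and> {x, y, z} \<in> U}"
      unfolding openin_theta3 by blast
    moreover have "{t \<in> topspace (subtopology euclidean D). (\<lambda>(x, y, z). {x, y, z}) t \<in> U}
        = D \<inter> {(x, y, z). x \<noteq> y \<and> y \<noteq> z \<and> x \<noteq> z \<and> {x, y, z} \<in> U}"
      unfolding D_def by auto
    ultimately show "openin (subtopology euclidean D)
        {t \<in> topspace (subtopology euclidean D). (\<lambda>(x, y, z). {x, y, z}) t \<in> U}"
      by (simp add: openin_open_Int)
  qed
  ultimately show ?thesis unfolding C_def by (rule image_compactin)
qed

text \<open>
  Pigeonhole: a point is close to at most one point of a separated triple, so for any two points
  some point of the triple is far from both.
\<close>

lemma separated3_avoid_two: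
  assumes "sym M" "sym M'" "M O M \<subseteq> N" "M' O M' \<subseteq> N" "separated3 N a b c"
  shows "\<exists>q\<in>{a, b, c}. (u, q) \<notin> M \<and> (v, q) \<notin> M'"
proof -
  have M: "(p, q) \<in> N" if "(u, p) \<in> M" "(u, q) \<in> M" for p q
    using assms(3) symD[OF assms(1) that(1)] that(2) by blast
  have M': "(p, q) \<in> N" if "(v, p) \<in> M'" "(v, q) \<in> M'" for p q
    using assms(4) symD[OF assms(2) that(1)] that(2) by blast
  show ?thesis
    using assms(5) M[of a b] M[of a c] M[of b c] M'[of a b] M'[of a c] M'[of b c]
    unfolding separated3_def by blast
qed

text \<open>
  Such maps behave like elements of a convergence group far from infinity.
\<close>

locale contracting_map = ladder +
  fixes f :: "'a \<Rightarrow> 'a"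
  assumes contracts: "separated3 L0 x y z \<Longrightarrow> \<not> separated3 L0 (f x) (f y) (f z)"
begin

lemma contracts_pair: "(x, y) \<notin> L0 \<Longrightarrow> (y, z) \<notin> L0 \<Longrightarrow> (x, z) \<notin> L0 \<Longrightarrow>
    (f x, f y) \<in> L0 \<or> (f y, f z) \<in> L0 \<or> (f x, f z) \<in> L0"
  using contracts[of x y z] unfolding separated3_def by blast

lemma separated3_far:
  assumes "separated3 L3 a b c"
  shows "(a, b) \<notin> L1" "(b, a) \<notin> L1" "(a, c) \<notin> L1" "(c, a) \<notin> L1" "(b, c) \<notin> L1" "(c, b) \<notin> L1"
    and "(a, b) \<notin> L0" "(b, a) \<notin> L0" "(a, c) \<notin> L0" "(c, a) \<notin> L0" "(b, c) \<notin> L0" "(c, b) \<notin> L0"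
  using assms sub01 sub12 sub23 sym3 unfolding separated3_def by blast+

lemma image_near_t3:
  assumes T: "separated3 L3 t1 t2 t3" and w: "f w1 = t1" "f w2 = t2" "f w3 = t3"
    and w12: "(w1, w2) \<in> L0" and w13: "(w1, w3) \<notin> L1"
    and z1: "(w1, z) \<notin> L1" and z3: "(z, w3) \<notin> L0"
  shows "(f z, t3) \<in> L0"
proof -
  note far = separated3_far[OF T]
  have "(z, w2) \<notin> L0" using z1 w12 step0 sym0 by blast
  moreover have "(w2, w3) \<notin> L0" using w12 w13 step0 by blast
  moreover have "(z, w1) \<notin> L0" using z1 sub01 sym0 by blast
  moreover have "(w1, w3) \<notin> L0" using w13 sub01 by blast
  ultimately have "(f z, t1) \<in> L0 \<or> (f z, t3) \<in> L0" "(f z, t2) \<in> L0 \<or> (f z, t3) \<in> L0"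
    using contracts_pair[of z w1 w3] contracts_pair[of z w2 w3] z3 w far by auto
  moreover have "\<not> ((f z, t1) \<in> L0 \<and> (f z, t2) \<in> L0)" using step0 sym0 far sub01 by blast
  ultimately show ?thesis by blast
qed

lemma image_near_t3_L1:
  assumes T: "separated3 L3 t1 t2 t3" and w: "f w1 = t1" "f w2 = t2" "f w3 = t3"
    and w12: "(w1, w2) \<in> L0" and w13: "(w1, w3) \<notin> L1"
    and z1: "(w1, z) \<notin> L1"
  shows "(f z, t3) \<in> L1"
proof (cases "(z, w3) \<in> L0")
  case False
  then show ?thesis using image_near_t3[OF assms] sub01 by blast
next
  case True
  note far = separated3_far[OF T]
  obtain q where q1: "(w1, q) \<notin> L1" and q3: "(w3, q) \<notin> L1"
  proof -
    have "L1 O L1 \<subseteq> L3" using comp_levels(2) sub23 by blast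
    then show thesis using that separated3_avoid_two[OF sym_levels(2,2) _ _ T, of w1 w3] by blast
  qed
  have "(q, w3) \<notin> L0" using q3 sub01 sym0 by blast
  then have fq: "(f q, t3) \<in> L0" using image_near_t3[OF T w w12 w13 q1] by blast
  have "(z, q) \<notin> L0" using True q3 step0 sym0 by blast
  moreover have "(z, w1) \<notin> L0" "(q, w1) \<notin> L0" using z1 q1 sub01 sym0 by blast+
  moreover have "(q, w2) \<notin> L0" "(z, w2) \<notin> L0" using q1 z1 w12 step0 sym0 by blast+
  moreover have "(f q, t1) \<notin> L0" "(f q, t2) \<notin> L0" using fq far step0 sym0 by blast+
  ultimately have "(f z, f q) \<in> L0 \<or> (f z, t1) \<in> L0" "(f z, f q) \<in> L0 \<or> (f z, t2) \<in> L0"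
    using contracts_pair[of z q w1] contracts_pair[of z q w2] w by auto
  moreover have "\<not> ((f z, t1) \<in> L0 \<and> (f z, t2) \<in> L0)" using step0 sym0 far by blast
  ultimately have "(f z, f q) \<in> L0" by blast
  then show ?thesis using fq step0 by blast
qed

lemma contraction_case_far:
  assumes T: "separated3 L3 t1 t2 t3" and w: "f w1 = t1" "f w2 = t2" "f w3 = t3"
    and w12: "(w1, w2) \<in> L0" and w13: "(w1, w3) \<notin> L1"
    and x: "(w1, x) \<notin> L1" and y: "(w1, y) \<notin> L1"
  shows "(f x, f y) \<in> L2"
  using image_near_t3_L1[OF T w w12 w13 x] image_near_t3_L1[OF T w w12 w13 y] sym1 step1 by blast

text \<open>
  Points \<open>L2\<close>-far from \<open>w1\<close> are
  then \<open>L0\<close>-far from all three \<open>w_i\<close>, so contraction forces their images together.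
\<close>

lemma contraction_case_near:
  assumes T: "separated3 L3 t1 t2 t3" and w: "f w1 = t1" "f w2 = t2" "f w3 = t3"
    and w12: "(w1, w2) \<in> L1" and w13: "(w1, w3) \<in> L1"
    and x: "(w1, x) \<notin> L2" and y: "(w1, y) \<notin> L2"
  shows "(f x, f y) \<in> L1"
proof -
  note far = separated3_far[OF T]
  have T1: "separated3 L1 t1 t2 t3" using T sub12 sub23 unfolding separated3_def by blast
  have away: "(u, w1) \<notin> L0 \<and> (u, w2) \<notin> L0 \<and> (u, w3) \<notin> L0" if "(w1, u) \<notin> L2" for u
    using that refl0 w12 w13 step1 sub01 sym0 by blast
  have key: "(f u, f q) \<in> L0" if uq: "(u, q) \<notin> L0" and u1: "(w1, u) \<notin> L2" and q1: "(w1, q) \<notin> L2"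
    for u q
  proof -
    obtain t where t: "t \<in> {t1, t2, t3}" "(f u, t) \<notin> L0" "(f q, t) \<notin> L0"
      using separated3_avoid_two[OF sym_levels(1,1) comp_levels(1,1) T1] by blast
    have "(f u, t1) \<in> L0 \<or> (t1, f q) \<in> L0 \<or> (f u, f q) \<in> L0"
         "(f u, t2) \<in> L0 \<or> (t2, f q) \<in> L0 \<or> (f u, f q) \<in> L0"
         "(f u, t3) \<in> L0 \<or> (t3, f q) \<in> L0 \<or> (f u, f q) \<in> L0"
      using contracts_pair[of u w1 q] contracts_pair[of u w2 q] contracts_pair[of u w3 q] away[OF u1] away[OF q1] uq w sym0
      by blast+
    then show ?thesis using t sym0 by auto
  qed
  show ?thesis
  proof (cases "(x, y) \<in> L0")
    case False
    then show ?thesis using key[OF False x y] sub01 by blast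
  next
    case True
    obtain q where xq: "(x, q) \<notin> L1" and q1: "(w1, q) \<notin> L2"
    proof -
      have "L1 O L1 \<subseteq> L3" using comp_levels(2) sub23 by blast
      then show thesis
        using that separated3_avoid_two[OF sym_levels(2,3) _ comp_levels(3) T, of x w1] by blast
    qed
    have "(x, q) \<notin> L0" using xq sub01 by blast
    moreover have "(y, q) \<notin> L0" using True xq step0 by blast
    ultimately have "(f x, f q) \<in> L0" "(f y, f q) \<in> L0" using key x y q1 by blast+
    then show ?thesis using step0 sym0 by blast
  qed
qed

lemma contraction_two_close:
  assumes T: "separated3 L3 (f w1) (f w2) (f w3)" and w12: "(w1, w2) \<in> L0"
  shows "\<exists>s. \<forall>x y. (s, x) \<notin> L2 \<longrightarrow> (s, y) \<notin> L2 \<longrightarrow> (f x, f y) \<in> L2"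
proof (cases "(w1, w3) \<in> L1")
  case True
  then show ?thesis
    using contraction_case_near[OF T refl refl refl _ True] w12 sub01 sub12 by blast
next
  case False
  then show ?thesis using contraction_case_far[OF T refl refl refl w12 False] sub12 by blast
qed

text \<open>
  Among the three preimages two are
  \<open>L0\<close>-close, since \<open>f\<close> contracts.
\<close>

lemma contraction:
  assumes T: "separated3 L3 (f w1) (f w2) (f w3)"
  shows "\<exists>s. \<forall>x y. (s, x) \<notin> L2 \<longrightarrow> (s, y) \<notin> L2 \<longrightarrow> (f x, f y) \<in> L2"
proof -
  have "separated3 L0 (f w1) (f w2) (f w3)" using T sub01 sub12 sub23 unfolding separated3_def by blast
  then have "(w1, w2) \<in> L0 \<or> (w2, w3) \<in> L0 \<or> (w1, w3) \<in> L0"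
    using contracts[of w1 w2 w3] unfolding separated3_def by blast
  moreover have "separated3 L3 (f w1) (f w3) (f w2)" "separated3 L3 (f w2) (f w3) (f w1)"
    using T sym3 unfolding separated3_def by blast+
  ultimately show ?thesis
    using contraction_two_close[OF T] contraction_two_close[of w1 w3 w2]
      contraction_two_close[of w2 w3 w1] by blast
qed

end

lemma small_mono: "small a U \<Longrightarrow> V \<subseteq> U \<Longrightarrow> small a V"
  unfolding small_def by blast

lemma linked_sym: "linked a b \<Longrightarrow> linked b a"
  unfolding linked_def by (metis sup_commute)

lemma entourage_diag: "entourage e \<Longrightarrow> Upair x x \<in> e"
  unfolding entourage_def by blast

lemma entourage_diag_nbhd:
  assumes "entourage e"
  obtains N where "diag_nbhd N" "\<And>x y. (x, y) \<in> N \<Longrightarrow> Upair x y \<in> e"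
proof -
  obtain V where V: "openin s2_top V" "range (\<lambda>x. Upair x x) \<subseteq> V" "V \<subseteq> e"
    using assms unfolding entourage_def by blast
  have "diag_nbhd {(x, y). Upair x y \<in> V}"
    unfolding diag_nbhd_def using V(1,2) openin_s2 by auto
  then show thesis using that V(3) by blast
qed

text \<open>
  A self-linked set of pairs containing the diagonal is never small on the complement of a point:
  otherwise the complement of the point and the point itself would unlink it from itself.
\<close>

lemma linked_self_not_small_punctured:
  assumes "linked a a" "\<And>x. Upair x x \<in> a"
  obtains x y where "x \<noteq> p" "y \<noteq> p" "Upair x y \<notin> a"
proof -
  have "small a {p}" unfolding small_def using assms(2) by blast
  moreover have "- {p} \<union> {p} = UNIV" by blast
  ultimately have "\<not> small a (- {p})" using assms(1) unfolding linked_def by blast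
  then show thesis using that unfolding small_def by blast
qed

definition small_off_ball :: "('a \<times> 'a) set \<Rightarrow> 'a uprod set \<Rightarrow> bool" where
  "small_off_ball v a \<longleftrightarrow> (\<exists>s. small a {y. (s, y) \<notin> v})"

locale entourage_orbit =
  fixes G :: "('g, 'b) monoid_scheme" and \<phi> :: "'g \<Rightarrow> 'a::t2_space \<Rightarrow> 'a" and a0 :: "'a uprod set"
  assumes compactum: "compactum_type TYPE('a)" and action: "homeo_action G \<phi>"
    and discontinuous: "three_discontinuous G \<phi>"
    and a0_entourage: "entourage a0" and a0_linked: "linked a0 a0"
begin

definition A :: "'a uprod set set" where
  "A = {ent_act \<phi> g a0 | g. g \<in> carrier G}"

lemma compact_UNIV: "compact (UNIV::'a set)"
  using compactum unfolding compactum_type_def by blast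

lemma three_points: "\<exists>x y z::'a. x \<noteq> y \<and> y \<noteq> z \<and> x \<noteq> z"
  using compactum unfolding compactum_type_def by blast

lemma group_action: "group_action G UNIV \<phi>"
  using action unfolding homeo_action_def by blast

lemma group: "group G"
  using group_action unfolding group_action_def group_hom_def by blast

lemma continuous_action: "g \<in> carrier G \<Longrightarrow> continuous_on UNIV (\<phi> g)"
  using action unfolding homeo_action_def by blast

lemma inv_closed: "g \<in> carrier G \<Longrightarrow> inv\<^bsub>G\<^esub> g \<in> carrier G"
  using group by (simp add: group.inv_closed)

lemma inv_inv: "g \<in> carrier G \<Longrightarrow> inv\<^bsub>G\<^esub> (inv\<^bsub>G\<^esub> g) = g"
  using group by (simp add: group.inv_inv)

lemma act_inv_left:
  assumes g: "g \<in> carrier G" shows "\<phi> (inv\<^bsub>G\<^esub> g) (\<phi> g x) = x"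
proof -
  have "\<phi> (inv\<^bsub>G\<^esub> g) (\<phi> g x) = \<phi> (inv\<^bsub>G\<^esub> g \<otimes>\<^bsub>G\<^esub> g) x"
    using group_action.composition_rule[OF group_action, of x "inv\<^bsub>G\<^esub> g" g] inv_closed g by simp
  also have "\<dots> = \<phi> \<one>\<^bsub>G\<^esub> x" using g group by (simp add: group.l_inv)
  also have "\<dots> = x" using group_action.id_eq_one[OF group_action] by (metis UNIV_I restrict_apply')
  finally show ?thesis .
qed

lemma act_inv_right: "g \<in> carrier G \<Longrightarrow> \<phi> g (\<phi> (inv\<^bsub>G\<^esub> g) x) = x"
  using act_inv_left[OF inv_closed, of g x] inv_inv by simp

lemma mem_ent_act:
  assumes g: "g \<in> carrier G"
  shows "Upair x y \<in> ent_act \<phi> g e \<longleftrightarrow> Upair (\<phi> (inv\<^bsub>G\<^esub> g) x) (\<phi> (inv\<^bsub>G\<^esub> g) y) \<in> e"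
proof
  assume "Upair x y \<in> ent_act \<phi> g e"
  then obtain u where u: "u \<in> e" "Upair x y = map_uprod (\<phi> g) u" unfolding ent_act_def by blast
  obtain a b where ab: "u = Upair a b" by (cases u)
  have "(x = \<phi> g a \<and> y = \<phi> g b) \<or> (x = \<phi> g b \<and> y = \<phi> g a)" using u(2) ab by auto
  then show "Upair (\<phi> (inv\<^bsub>G\<^esub> g) x) (\<phi> (inv\<^bsub>G\<^esub> g) y) \<in> e"
    using act_inv_left[OF g] u(1) ab Upair_inject by metis
next
  assume "Upair (\<phi> (inv\<^bsub>G\<^esub> g) x) (\<phi> (inv\<^bsub>G\<^esub> g) y) \<in> e"
  moreover have "map_uprod (\<phi> g) (Upair (\<phi> (inv\<^bsub>G\<^esub> g) x) (\<phi> (inv\<^bsub>G\<^esub> g) y)) = Upair x y"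
    using act_inv_right[OF g] by simp
  ultimately show "Upair x y \<in> ent_act \<phi> g e" unfolding ent_act_def by (metis image_eqI)
qed

lemma small_ent_act:
  "g \<in> carrier G \<Longrightarrow> small (ent_act \<phi> g e) U \<longleftrightarrow> small e (\<phi> (inv\<^bsub>G\<^esub> g) ` U)"
  unfolding small_def using mem_ent_act by auto

lemma A_diag: "a \<in> A \<Longrightarrow> Upair x x \<in> a"
  unfolding A_def using mem_ent_act entourage_diag[OF a0_entourage] by auto

text \<open>Linking is preserved by the action, so every element of \<open>A\<close> is linked with itself.\<close>

lemma A_linked_self:
  assumes "a \<in> A" shows "linked a a"
  unfolding linked_def
proof
  obtain g where g: "g \<in> carrier G" "a = ent_act \<phi> g a0" using assms unfolding A_def by blast
  let ?h = "\<phi> (inv\<^bsub>G\<^esub> g)"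
  assume "\<exists>U V. U \<union> V = UNIV \<and> small a U \<and> small a V"
  then obtain U V where UV: "U \<union> V = UNIV" "small a U" "small a V" by blast
  have "?h ` U \<union> ?h ` V = UNIV"
    using group_action.surj_prop[OF group_action inv_closed[OF g(1)]] UV(1) by (metis image_Un)
  moreover have "small a0 (?h ` U)" "small a0 (?h ` V)" using UV small_ent_act[OF g(1)] g(2) by auto
  ultimately show False using a0_linked unfolding linked_def by blast
qed

lemma A_diag_nbhd:
  assumes "a \<in> A"
  obtains N where "diag_nbhd N" "\<And>x y. (x, y) \<in> N \<Longrightarrow> Upair x y \<in> a"
proof -
  obtain g where g: "g \<in> carrier G" "a = ent_act \<phi> g a0" using assms unfolding A_def by blast
  obtain N0 where N0: "diag_nbhd N0" "\<And>x y. (x, y) \<in> N0 \<Longrightarrow> Upair x y \<in> a0"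
    using entourage_diag_nbhd[OF a0_entourage] by blast
  define h where "h = \<phi> (inv\<^bsub>G\<^esub> g)"
  have hc: "continuous_on UNIV h" unfolding h_def by (rule continuous_action[OF inv_closed[OF g(1)]])
  have "continuous_on UNIV (\<lambda>t. (h (fst t), h (snd t)))"
    by (intro continuous_on_Pair continuous_on_compose2[OF hc] continuous_intros) auto
  then have "open ((\<lambda>t. (h (fst t), h (snd t))) -` N0)"
    using N0(1) unfolding diag_nbhd_def by (intro open_vimage) auto
  then have "diag_nbhd ((\<lambda>t. (h (fst t), h (snd t))) -` N0)"
    using N0(1) unfolding diag_nbhd_def by auto
  moreover have "Upair x y \<in> a" if "(x, y) \<in> (\<lambda>t. (h (fst t), h (snd t))) -` N0" for x y
    using that N0(2) g mem_ent_act unfolding h_def by auto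
  ultimately show thesis using that by blast
qed

text \<open>
  3-discontinuity, applied to the compact set of \<open>L0\<close>-separated triples, shows that all but finitely
  many group elements act as contracting maps for a given ladder.
\<close>

lemma finite_non_contracting:
  assumes L: "ladder L0 L1 L2 L3" "diag_nbhd L0"
  shows "finite {g \<in> carrier G. \<not> contracting_map L0 L1 L2 L3 (\<phi> g)}"
proof -
  define K where "K = (\<lambda>(x, y, z). {x, y, z}) ` {(x, y, z). separated3 L0 x y z}"
  have "compactin theta3_top K"
    unfolding K_def by (rule compactin_separated_triples[OF compact_UNIV L(2)])
  then have fin: "finite {g \<in> carrier G. (`) (\<phi> g) ` K \<inter> K \<noteq> {}}"
    using discontinuous unfolding three_discontinuous_def by blast
  have "(`) (\<phi> g) ` K \<inter> K \<noteq> {}" if nc: "\<not> contracting_map L0 L1 L2 L3 (\<phi> g)" for g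
  proof -
    obtain x y z where xyz: "separated3 L0 x y z" "separated3 L0 (\<phi> g x) (\<phi> g y) (\<phi> g z)"
      using nc L(1) unfolding contracting_map_def contracting_map_axioms_def by blast
    then have "{x, y, z} \<in> K" "{\<phi> g x, \<phi> g y, \<phi> g z} \<in> K" unfolding K_def by force+
    moreover have "\<phi> g ` {x, y, z} = {\<phi> g x, \<phi> g y, \<phi> g z}" by simp
    ultimately show ?thesis by (metis IntI empty_iff image_eqI)
  qed
  then show ?thesis by (blast intro: finite_subset[OF _ fin])
qed

text \<open>
  The ladder is chosen inside \<open>v\<close>, inside the neighbourhood
  carried by \<open>a0\<close>, and below the distances of three fixed distinct points.
\<close>

lemma finite_not_small_off_ball:
  assumes v: "diag_nbhd v"
  shows "finite {a \<in> A. \<not> small_off_ball v a}"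
proof -
  obtain t1 t2 t3 :: 'a where t: "t1 \<noteq> t2" "t2 \<noteq> t3" "t1 \<noteq> t3" using three_points by blast
  obtain N0 where N0: "diag_nbhd N0" "\<And>x y. (x, y) \<in> N0 \<Longrightarrow> Upair x y \<in> a0"
    using entourage_diag_nbhd[OF a0_entourage] by blast
  define F where "F = {(t1, t2), (t2, t1), (t1, t3), (t3, t1), (t2, t3), (t3, t2)}"
  have "open (- F)" unfolding F_def by (intro open_Compl finite_imp_closed) simp
  then have "diag_nbhd (v \<inter> N0 \<inter> - F)"
    using v N0(1) t unfolding diag_nbhd_def F_def by (auto intro!: open_Int)
  then obtain L0 L1 L2 L3 where L: "ladder L0 L1 L2 L3" "diag_nbhd L0" "L3 \<subseteq> v \<inter> N0 \<inter> - F"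
    using nbhd_ladder[OF compact_UNIV] by metis
  have L2: "L2 \<subseteq> v" "L2 \<subseteq> N0" using L(1,3) ladder.sub23 by blast+
  have sep: "separated3 L3 t1 t2 t3" using L(3) unfolding F_def separated3_def by blast
  have contracting_small: "small_off_ball v (ent_act \<phi> (inv\<^bsub>G\<^esub> g) a0)"
    if g: "g \<in> carrier G" "contracting_map L0 L1 L2 L3 (\<phi> g)" for g
  proof -
    have "separated3 L3 (\<phi> g (\<phi> (inv\<^bsub>G\<^esub> g) t1)) (\<phi> g (\<phi> (inv\<^bsub>G\<^esub> g) t2)) (\<phi> g (\<phi> (inv\<^bsub>G\<^esub> g) t3))"
      using sep act_inv_right[OF g(1)] by simp
    then obtain s where s: "\<And>x y. (s, x) \<notin> L2 \<Longrightarrow> (s, y) \<notin> L2 \<Longrightarrow> (\<phi> g x, \<phi> g y) \<in> L2"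
      using contracting_map.contraction[OF g(2)] by blast
    have "small (ent_act \<phi> (inv\<^bsub>G\<^esub> g) a0) {y. (s, y) \<notin> v}"
      unfolding small_def mem_ent_act[OF inv_closed[OF g(1)]] inv_inv[OF g(1)]
      using s L2 N0(2) by blast
    then show ?thesis unfolding small_off_ball_def by blast
  qed
  have "{a \<in> A. \<not> small_off_ball v a}
      \<subseteq> (\<lambda>g. ent_act \<phi> (inv\<^bsub>G\<^esub> g) a0) ` {g \<in> carrier G. \<not> contracting_map L0 L1 L2 L3 (\<phi> g)}"
  proof (intro subsetI)
    fix a assume a: "a \<in> {a \<in> A. \<not> small_off_ball v a}"
    then obtain h where h: "h \<in> carrier G" "a = ent_act \<phi> h a0" unfolding A_def by blast
    then have "a = ent_act \<phi> (inv\<^bsub>G\<^esub> (inv\<^bsub>G\<^esub> h)) a0" using inv_inv by simp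
    moreover have "\<not> contracting_map L0 L1 L2 L3 (\<phi> (inv\<^bsub>G\<^esub> h))"
      using a calculation inv_closed[OF h(1)] contracting_small by force
    ultimately show "a \<in> (\<lambda>g. ent_act \<phi> (inv\<^bsub>G\<^esub> g) a0) ` {g \<in> carrier G. \<not> contracting_map L0 L1 L2 L3 (\<phi> g)}"
      using inv_closed[OF h(1)] by blast
  qed
  then show ?thesis using finite_non_contracting[OF L(1,2)] finite_surj by blast
qed

lemma linked_locally_finite:
  assumes a: "a \<in> A" shows "finite {b \<in> A. linked a b}"
proof -
  obtain N where N: "diag_nbhd N" "\<And>x y. (x, y) \<in> N \<Longrightarrow> Upair x y \<in> a"
    using A_diag_nbhd[OF a] by blast
  obtain L where L: "diag_nbhd L" "sym L" "L O L \<subseteq> N" using half_nbhd[OF compact_UNIV N(1)] .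
  have "\<not> small_off_ball L b" if "linked a b" for b
  proof
    assume "small_off_ball L b"
    then obtain s where s: "small b {y. (s, y) \<notin> L}" unfolding small_off_ball_def by blast
    have "(x, y) \<in> N" if "(s, x) \<in> L" "(s, y) \<in> L" for x y
      using L(3) symD[OF L(2) that(1)] that(2) by (meson relcompI subsetD)
    then have "small a {y. (s, y) \<in> L}" unfolding small_def using N(2) by blast
    moreover have "{y. (s, y) \<in> L} \<union> {y. (s, y) \<notin> L} = UNIV" by blast
    ultimately show False using s \<open>linked a b\<close> unfolding linked_def by blast
  qed
  then have "{b \<in> A. linked a b} \<subseteq> {b \<in> A. \<not> small_off_ball L b}" by blast
  then show ?thesis using finite_not_small_off_ball[OF L(1)] finite_subset by blast
qed

lemma finite_linked_neighbours:
  assumes "finite X" "X \<subseteq> A" shows "finite {c \<in> A. \<exists>x\<in>X. linked c x}"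
proof -
  have "{c \<in> A. \<exists>x\<in>X. linked c x} \<subseteq> (\<Union>x\<in>X. {b \<in> A. linked x b})" using linked_sym by blast
  moreover have "finite (\<Union>x\<in>X. {b \<in> A. linked x b})" using assms linked_locally_finite by blast
  ultimately show ?thesis using finite_subset by blast
qed

lemma linked_step:
  assumes W: "open W" "p \<in> W"
  obtains U E where "open U" "p \<in> U" "U \<subseteq> W" "finite E" "E \<subseteq> A"
    "\<And>a c. c \<in> A \<Longrightarrow> c \<notin> E \<Longrightarrow> small c (- U) \<Longrightarrow> a \<in> A \<Longrightarrow> linked a c \<Longrightarrow> small a (- W)"
proof -
  obtain U v where U: "open U" "p \<in> U" "U \<subseteq> W" and v: "diag_nbhd v" "sym v" "(v O v) `` U \<subseteq> W"
    using shrinking_nbhd[OF compact_UNIV W] by blast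
  define E0 where "E0 = {a \<in> A. \<not> small_off_ball v a}"
  define E where "E = E0 \<union> {c \<in> A. \<exists>x\<in>E0. linked c x}"
  have "finite E0" "E0 \<subseteq> A" unfolding E0_def using finite_not_small_off_ball[OF v(1)] by auto
  then have E: "finite E" "E \<subseteq> A" unfolding E_def using finite_linked_neighbours by auto
  have "small a (- W)" if c: "c \<in> A" "c \<notin> E" "small c (- U)" and a: "a \<in> A" "linked a c" for a c
  proof -
    have "a \<notin> E0" using c a linked_sym unfolding E_def by blast
    then obtain s where s: "small a {y. (s, y) \<notin> v}" using a unfolding E0_def small_off_ball_def by blast
    show ?thesis
    proof (cases "\<exists>q\<in>U. (s, q) \<in> v")
      case True
      then obtain q where q: "q \<in> U" "(q, s) \<in> v" using symD[OF v(2)] by blast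
      have "y \<in> W" if "(s, y) \<in> v" for y
        using v(3) q that by (meson ImageI relcompI subsetD)
      then show ?thesis using s small_mono by blast
    next
      case False
      then have "small a U" using s small_mono[of a _ U] by blast
      moreover have "U \<union> - U = UNIV" by blast
      ultimately show ?thesis using c(3) a(2) unfolding linked_def by blast
    qed
  qed
  with U E show thesis by (rule that)
qed

end

definition walk :: "'a uprod set set \<Rightarrow> 'a uprod set list \<Rightarrow> nat \<Rightarrow> bool" where
  "walk A xs n \<longleftrightarrow> length xs = Suc n \<and> set xs \<subseteq> A \<and> (\<forall>i<n. linked (xs ! i) (xs ! Suc i))"

lemma walk_dA: "walk A xs n \<Longrightarrow> dA A (xs ! 0) (xs ! n) \<le> enat n"
  unfolding dA_def walk_def by (rule INF_lower) auto

lemma dA_obtain_walk: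
  assumes "dA A c b \<le> enat k"
  obtains n xs where "n \<le> k" "walk A xs n" "xs ! 0 = c" "xs ! n = b"
proof (rule ccontr)
  note found = that
  assume no_walk: "\<not> thesis"
  let ?S = "{n. \<exists>xs. length xs = Suc n \<and> xs ! 0 = c \<and> xs ! n = b \<and>
       set xs \<subseteq> A \<and> (\<forall>i<n. linked (xs ! i) (xs ! Suc i))}"
  have "Suc k \<le> n" if nS: "n \<in> ?S" for n
  proof -
    obtain xs where "walk A xs n" "xs ! 0 = c" "xs ! n = b" using nS unfolding walk_def by blast
    then show ?thesis using no_walk found by (metis not_less_eq_eq)
  qed
  then have "enat (Suc k) \<le> (INF n\<in>?S. enat n)" by (intro INF_greatest) auto
  also have "\<dots> \<le> enat k" using assms unfolding dA_def by simp
  finally show False by simp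
qed

text \<open>Reversed walks show that \<open>dA\<close> is symmetric.\<close>

lemma walk_rev:
  assumes w: "walk A xs n"
  shows "walk A (rev xs) n" "rev xs ! 0 = xs ! n" "rev xs ! n = xs ! 0"
proof -
  have len: "length xs = Suc n" using w unfolding walk_def by simp
  have rev_nth': "rev xs ! i = xs ! (n - i)" if "i \<le> n" for i using len that by (simp add: rev_nth)
  have "linked (rev xs ! i) (rev xs ! Suc i)" if i: "i < n" for i
  proof -
    have "linked (xs ! (n - Suc i)) (xs ! Suc (n - Suc i))" using w i unfolding walk_def by simp
    moreover have "Suc (n - Suc i) = n - i" using i by simp
    ultimately show ?thesis using rev_nth' i linked_sym by simp
  qed
  then show "walk A (rev xs) n" using w len unfolding walk_def by simp
  show "rev xs ! 0 = xs ! n" "rev xs ! n = xs ! 0" using rev_nth' by simp_all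
qed

lemma dA_sym_le: "dA A c b \<le> enat k \<Longrightarrow> dA A b c \<le> enat k"
proof -
  assume "dA A c b \<le> enat k"
  then obtain n xs where n: "n \<le> k" "walk A xs n" "xs ! 0 = c" "xs ! n = b" by (rule dA_obtain_walk)
  then have "dA A b c \<le> enat n" using walk_rev[OF n(2)] walk_dA[of A "rev xs" n] by simp
  then show ?thesis using n(1) by (meson enat_ord_simps(1) order_trans)
qed

lemma walk_tl:
  assumes "walk A xs (Suc m)"
  shows "walk A (tl xs) m" "tl xs ! 0 = xs ! 1" "tl xs ! m = xs ! Suc m"
    "linked (xs ! 0) (xs ! 1)" "xs ! 0 \<in> A" "xs ! 1 \<in> A"
proof -
  obtain y ys where xs: "xs = y # ys" using assms unfolding walk_def by (cases xs) auto
  show "walk A (tl xs) m" "tl xs ! 0 = xs ! 1" "tl xs ! m = xs ! Suc m"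
    "linked (xs ! 0) (xs ! 1)" "xs ! 0 \<in> A" "xs ! 1 \<in> A"
    using assms unfolding xs walk_def by (auto simp: nth_Cons')
qed

lemma subset_nbhd: "B \<subseteq> A \<Longrightarrow> B \<subseteq> nbhd A d B"
proof
  fix b assume "B \<subseteq> A" "b \<in> B"
  then have "walk A [b] 0" unfolding walk_def by auto
  then have "dA A b b \<le> enat d" using walk_dA[of A "[b]" 0] by (simp add: order_trans)
  then show "b \<in> nbhd A d B" unfolding nbhd_def using \<open>B \<subseteq> A\<close> \<open>b \<in> B\<close> by blast
qed

context entourage_orbit
begin

text \<open>By local finiteness, bounded neighbourhoods of finite subsets of \<open>A\<close> are finite.\<close>

lemma finite_nbhd:
  assumes "finite S" "S \<subseteq> A" shows "finite (nbhd A k S)"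
proof (induction k)
  case 0
  have "nbhd A 0 S \<subseteq> S"
  proof
    fix c assume "c \<in> nbhd A 0 S"
    then obtain b where b: "b \<in> S" "dA A c b \<le> enat 0" unfolding nbhd_def by blast
    from b(2) obtain n xs where "n \<le> 0" "walk A xs n" "xs ! 0 = c" "xs ! n = b"
      by (rule dA_obtain_walk)
    then show "c \<in> S" using b(1) by simp
  qed
  then show ?case using assms(1) finite_subset by blast
next
  case (Suc k)
  have "nbhd A (Suc k) S \<subseteq> nbhd A k S \<union> {c \<in> A. \<exists>x\<in>nbhd A k S. linked c x}"
  proof
    fix c assume c: "c \<in> nbhd A (Suc k) S"
    then obtain b where b: "b \<in> S" "dA A c b \<le> enat (Suc k)" unfolding nbhd_def by blast
    from b(2) obtain n xs where w: "n \<le> Suc k" "walk A xs n" "xs ! 0 = c" "xs ! n = b"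
      by (rule dA_obtain_walk)
    show "c \<in> nbhd A k S \<union> {c \<in> A. \<exists>x\<in>nbhd A k S. linked c x}"
    proof (cases "n \<le> k")
      case True
      then have "dA A c b \<le> enat k"
        using walk_dA[OF w(2)] w(3,4) by (metis enat_ord_simps(1) order_trans)
      then show ?thesis using c b(1) unfolding nbhd_def by blast
    next
      case False
      then have n: "n = Suc k" using w(1) by simp
      note tl = walk_tl[OF w(2)[unfolded n]]
      have "dA A (xs ! 1) b \<le> enat k" using walk_dA[OF tl(1)] tl(2,3) w(4) n by simp
      moreover note tl(6)
      ultimately have "xs ! 1 \<in> nbhd A k S" using b(1) unfolding nbhd_def by blast
      then show ?thesis using tl(4,5) w(3) by blast
    qed
  qed
  moreover have "finite (nbhd A k S \<union> {c \<in> A. \<exists>x\<in>nbhd A k S. linked c x})"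
    using Suc.IH finite_linked_neighbours[of "nbhd A k S"] unfolding nbhd_def by blast
  ultimately show ?case using finite_subset by blast
qed

lemma walk_concentration:
  assumes "open W" "p \<in> W"
  shows "\<exists>U F. open U \<and> p \<in> U \<and> U \<subseteq> W \<and> finite F \<and> F \<subseteq> A \<and>
     (\<forall>n\<le>k. \<forall>xs. walk A xs n \<longrightarrow> xs ! 0 \<notin> F \<longrightarrow> small (xs ! 0) (- U) \<longrightarrow> small (xs ! n) (- W))"
  using assms
proof (induction k arbitrary: W)
  case 0
  then show ?case by (intro exI[of _ W] exI[of _ "{}"]) auto
next
  case (Suc k)
  obtain U' F' where IH: "open U'" "p \<in> U'" "U' \<subseteq> W" "finite F'" "F' \<subseteq> A"
    "\<forall>n\<le>k. \<forall>xs. walk A xs n \<longrightarrow> xs ! 0 \<notin> F' \<longrightarrow> small (xs ! 0) (- U') \<longrightarrow> small (xs ! n) (- W)"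
    using Suc.IH[OF Suc.prems] by blast
  obtain U E where U: "open U" "p \<in> U" "U \<subseteq> U'" "finite E" "E \<subseteq> A"
    and step: "\<And>a c. c \<in> A \<Longrightarrow> c \<notin> E \<Longrightarrow> small c (- U) \<Longrightarrow> a \<in> A \<Longrightarrow> linked a c \<Longrightarrow> small a (- U')"
    using linked_step[OF IH(1,2)] by blast
  define F where "F = F' \<union> E \<union> {c \<in> A. \<exists>x\<in>F'. linked c x}"
  have F: "finite F" "F \<subseteq> A" unfolding F_def using IH(4,5) U(4,5) finite_linked_neighbours by auto
  have "small (xs ! n) (- W)"
    if n: "n \<le> Suc k" and w: "walk A xs n" and x0: "xs ! 0 \<notin> F" and s0: "small (xs ! 0) (- U)" for n xs
  proof (cases n)
    case 0
    then show ?thesis using s0 U(3) IH(3) small_mono by blast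
  next
    case (Suc m)
    note tl = walk_tl[OF w[unfolded Suc]]
    have "small (xs ! 1) (- U')"
      using step[OF tl(5) _ s0 tl(6)] x0 tl(4) linked_sym unfolding F_def by blast
    moreover have "xs ! 1 \<notin> F'" using x0 tl(4,5) unfolding F_def by blast
    ultimately have "small (tl xs ! m) (- W)" using IH(6) n Suc tl(1,2) by auto
    then show ?thesis using tl(3) Suc by simp
  qed
  then show ?case using U(1,2,3) IH(3) F by blast
qed

lemma acc_point_nbhd_iff:
  assumes B: "B \<subseteq> A"
  shows "acc_point (nbhd A d B) p \<longleftrightarrow> acc_point B p"
proof
  assume acc: "acc_point (nbhd A d B) p"
  show "acc_point B p" unfolding acc_point_def
  proof (intro allI impI notI)
    fix W :: "'a set" assume W: "open W \<and> p \<in> W"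
    define S where "S = {b \<in> B. small b (- W)}"
    assume "finite {b \<in> B. small b (- W)}"
    then have S: "finite S" "S \<subseteq> A" unfolding S_def using B by auto
    obtain U F where U: "open U" "p \<in> U" "finite F"
      and walks: "\<forall>n\<le>d. \<forall>xs. walk A xs n \<longrightarrow> xs ! 0 \<notin> F \<longrightarrow> small (xs ! 0) (- U) \<longrightarrow> small (xs ! n) (- W)"
      using walk_concentration[of W p d] W by blast
    have "{c \<in> nbhd A d B. small c (- U)} \<subseteq> F \<union> nbhd A d S"
    proof
      fix c assume c: "c \<in> {c \<in> nbhd A d B. small c (- U)}"
      show "c \<in> F \<union> nbhd A d S"
      proof (cases "c \<in> F")
        case False
        obtain b where b: "b \<in> B" "dA A c b \<le> enat d" using c unfolding nbhd_def by blast
        from b(2) obtain n xs where w: "n \<le> d" "walk A xs n" "xs ! 0 = c" "xs ! n = b"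
          by (rule dA_obtain_walk)
        then have "b \<in> S" using walks b(1) False c unfolding S_def by blast
        then show ?thesis using b(2) c unfolding nbhd_def by blast
      qed simp
    qed
    moreover have "finite (F \<union> nbhd A d S)" using U(3) finite_nbhd[OF S] by blast
    moreover have "infinite {c \<in> nbhd A d B. small c (- U)}"
      using acc U(1,2) unfolding acc_point_def by blast
    ultimately show False using finite_subset by blast
  qed
next
  assume acc: "acc_point B p"
  show "acc_point (nbhd A d B) p" unfolding acc_point_def
  proof (intro allI impI)
    fix W :: "'a set" assume "open W \<and> p \<in> W"
    then have "infinite {b \<in> B. small b (- W)}" using acc unfolding acc_point_def by blast
    moreover have "{b \<in> B. small b (- W)} \<subseteq> {b \<in> nbhd A d B. small b (- W)}"
      using subset_nbhd[OF B] by blast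
    ultimately show "infinite {b \<in> nbhd A d B. small b (- W)}" using infinite_super by blast
  qed
qed

text \<open>
  Elements of
  the finite exceptional set are eventually avoided, since no element of \<open>A\<close> is small off a point.
\<close>

lemma ent_tendsto_bounded_distance:
  assumes M: "\<And>n. dA A (b n) (c n) \<le> enat M" and b_lim: "ent_tendsto b p"
  shows "ent_tendsto c p"
  unfolding ent_tendsto_def
proof (intro allI impI)
  fix W :: "'a set" assume W: "open W \<and> p \<in> W"
  obtain U F where U: "open U" "p \<in> U" "finite F" "F \<subseteq> A"
    and walks: "\<forall>n\<le>M. \<forall>xs. walk A xs n \<longrightarrow> xs ! 0 \<notin> F \<longrightarrow> small (xs ! 0) (- U) \<longrightarrow> small (xs ! n) (- W)"
    using walk_concentration[of W p M] W by blast
  have near: "\<forall>\<^sub>F n in sequentially. small (b n) (- U)"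
    using b_lim U(1,2) unfolding ent_tendsto_def by blast
  have avoid: "\<forall>\<^sub>F n in sequentially. b n \<noteq> a" if a: "a \<in> F" for a
  proof -
    obtain x y where xy: "x \<noteq> p" "y \<noteq> p" "Upair x y \<notin> a"
      using linked_self_not_small_punctured[OF A_linked_self A_diag] a U(4) by blast
    have "open (- {x, y})" by (intro open_Compl finite_imp_closed) simp
    moreover have "p \<in> - {x, y}" using xy by simp
    ultimately have "\<forall>\<^sub>F n in sequentially. small (b n) (- (- {x, y}))"
      using b_lim unfolding ent_tendsto_def by blast
    then show ?thesis
    proof eventually_elim
      case (elim n)
      then have "Upair x y \<in> b n" unfolding small_def by simp
      then show ?case using xy(3) by blast
    qed
  qed
  have "\<forall>\<^sub>F n in sequentially. \<forall>a\<in>F. b n \<noteq> a"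
    by (rule eventually_ball_finite[OF U(3)]) (simp add: avoid)
  with near show "\<forall>\<^sub>F n in sequentially. small (c n) (- W)"
  proof eventually_elim
    case (elim n)
    from M[of n] obtain m xs where w: "m \<le> M" "walk A xs m" "xs ! 0 = b n" "xs ! m = c n"
      by (rule dA_obtain_walk)
    then show ?case using walks[rule_format, OF w(1,2)] elim by auto
  qed
qed

end

theorem lemma3p12:
  fixes G :: "('g, 'b) monoid_scheme"
    and \<phi> :: "'g \<Rightarrow> 'a::t2_space \<Rightarrow> 'a"
    and a0 :: "'a uprod set"
  assumes "compactum_type TYPE('a)"
    and "homeo_action G \<phi>"
    and "three_discontinuous G \<phi>"
    and "two_cocompact G \<phi>"
    and "entourage a0"
    and "linked a0 a0"
  defines "A \<equiv> {ent_act \<phi> g a0 | g. g \<in> carrier G}"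
  shows "(\<forall>B d. B \<subseteq> A \<and> infinite B \<and> d \<ge> 1 \<longrightarrow>
            (\<forall>p. acc_point (nbhd A d B) p \<longleftrightarrow> acc_point B p))
       \<and> (\<forall>b c p. range b \<subseteq> A \<and> range c \<subseteq> A \<and> (\<exists>M::nat. \<forall>n. dA A (b n) (c n) \<le> enat M) \<longrightarrow>
            (ent_tendsto b p \<longleftrightarrow> ent_tendsto c p))"
proof -
  have A: "A = entourage_orbit.A G \<phi> a0"
    unfolding A_def entourage_orbit.A_def[OF entourage_orbit.intro[OF assms(1,2,3,5,6)]] ..
  interpret entourage_orbit G \<phi> a0
    using assms(1,2,3,5,6) by unfold_locales
  show ?thesis
  proof (intro conjI allI impI)
    fix B d p assume "B \<subseteq> A \<and> infinite B \<and> 1 \<le> (d::nat)"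
    then show "acc_point (nbhd A d B) p \<longleftrightarrow> acc_point B p"
      unfolding A by (simp add: acc_point_nbhd_iff)
  next
    fix b c :: "nat \<Rightarrow> 'a uprod set" and p
    assume "range b \<subseteq> A \<and> range c \<subseteq> A \<and> (\<exists>M::nat. \<forall>n. dA A (b n) (c n) \<le> enat M)"
    then obtain M where M: "\<And>n. dA (entourage_orbit.A G \<phi> a0) (b n) (c n) \<le> enat M"
      unfolding A by blast
    moreover have "dA (entourage_orbit.A G \<phi> a0) (c n) (b n) \<le> enat M" for n
      using M by (rule dA_sym_le)
    ultimately show "ent_tendsto b p \<longleftrightarrow> ent_tendsto c p"
      using ent_tendsto_bounded_distance by blast
  qed
qed

end
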